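(* Let $n\ge1$, $0<q<\infty$ and $\pi\sim\mu_{n,q}$. Then $\mathrm{Var}(\mathrm{LIS}(\pi))\le n-1$. Furthermore, for all $t>0$, $$\mathbb{P}\big(|\mathrm{LIS}(\pi)-\mathbb{E}(\mathrm{LIS}(\pi))|>t\sqrt{n-1}\big)<2e^{-t^2/2}.$$
   Context: For $q>0$ and an integer $n\ge1$, the Mallows measure $\mu_{n,q}$ on $S_n$ is $\mu_{n,q}(\pi)=q^{\mathrm{inv}(\pi)}/Z_{n,q}$, where $\mathrm{inv}(\pi)$ is the number of pairs $i<j$ with $\pi(i)>\pi(j)$ and $Z_{n,q}$ is the normalizing constant. $\mathrm{LIS}(\pi)$ denotes the length of a longest increasing subsequence of $\pi$. *)

theory Defs
  imports "HOL-Analysis.Analysis" "HOL-Combinatorics.Permutations"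
begin

definition perms :: "nat \<Rightarrow> (nat \<Rightarrow> nat) set" where
  "perms n = {\<pi>. \<pi> permutes {1..n}}"

definition inv_count :: "nat \<Rightarrow> (nat \<Rightarrow> nat) \<Rightarrow> nat" where
  "inv_count n \<pi> = card {(i, j). i \<in> {1..n} \<and> j \<in> {1..n} \<and> i < j \<and> \<pi> i > \<pi> j}"

definition LIS :: "nat \<Rightarrow> (nat \<Rightarrow> nat) \<Rightarrow> nat" where
  "LIS n \<pi> = Max {card S | S. S \<subseteq> {1..n} \<and> (\<forall>i\<in>S. \<forall>j\<in>S. i < j \<longrightarrow> \<pi> i < \<pi> j)}"

definition mallows_Z :: "nat \<Rightarrow> real \<Rightarrow> real" where
  "mallows_Z n q = (\<Sum>\<sigma>\<in>perms n. q ^ inv_count n \<sigma>)"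

definition mallows :: "nat \<Rightarrow> real \<Rightarrow> (nat \<Rightarrow> nat) \<Rightarrow> real" where
  "mallows n q \<pi> = q ^ inv_count n \<pi> / mallows_Z n q"

definition mallows_E :: "nat \<Rightarrow> real \<Rightarrow> ((nat \<Rightarrow> nat) \<Rightarrow> real) \<Rightarrow> real" where
  "mallows_E n q X = (\<Sum>\<pi>\<in>perms n. mallows n q \<pi> * X \<pi>)"

definition mallows_Var :: "nat \<Rightarrow> real \<Rightarrow> ((nat \<Rightarrow> nat) \<Rightarrow> real) \<Rightarrow> real" where
  "mallows_Var n q X = mallows_E n q (\<lambda>\<pi>. (X \<pi> - mallows_E n q X)\<^sup>2)"

definition mallows_P :: "nat \<Rightarrow> real \<Rightarrow> ((nat \<Rightarrow> nat) \<Rightarrow> bool) \<Rightarrow> real" where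
  "mallows_P n q A = (\<Sum>\<pi>\<in>{\<pi>\<in>perms n. A \<pi>}. mallows n q \<pi>)"

end

theory Submission
  imports Defs "HOL-Probability.Hoeffding"
begin

text \<open>Under the Mallows measure the Lehmer code \<open>(c\<^sub>1, \<dots>, c\<^bsub>n-1\<^esub>)\<close> of \<open>\<pi>\<close>, where
  \<open>c\<^sub>k\<close> counts the later entries smaller than \<open>\<pi>(k)\<close>, has independent digits with
  \<open>P(c\<^sub>k = c) \<propto> q\<^sup>c\<close> on \<open>{0..n-k}\<close>, because \<open>inv(\<pi>)\<close> is the sum of the digits.
  Changing one digit leaves the earlier values of \<open>\<pi>\<close> unchanged and the relative order of
  the later ones intact, so it changes the LIS by at most 1. The Doob martingale of the LIS with
  respect to the \<open>n - 1\<close> digits thus has increments bounded by 1, which yields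
  \<open>Var \<le> n - 1\<close>, and, through Hoeffding's lemma, the Azuma-type tail bound.\<close>

section \<open>Weighted averages\<close>

definition wavg :: "'a set \<Rightarrow> ('a \<Rightarrow> real) \<Rightarrow> ('a \<Rightarrow> real) \<Rightarrow> real" where
  "wavg I w f = (\<Sum>i\<in>I. w i * f i) / (\<Sum>i\<in>I. w i)"

lemma wavg_singleton [simp]: "w x \<noteq> 0 \<Longrightarrow> wavg {x} w f = f x"
  by (simp add: wavg_def)

locale pos_weights =
  fixes I :: "'a set" and w :: "'a \<Rightarrow> real"
  assumes finite_I: "finite I" and I_nonempty: "I \<noteq> {}" and w_pos: "\<And>i. i \<in> I \<Longrightarrow> w i > 0"
begin

lemma sum_weights_pos: "(\<Sum>i\<in>I. w i) > 0"
  using finite_I I_nonempty w_pos by (intro sum_pos) auto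

lemma wavg_const [simp]: "wavg I w (\<lambda>_. c) = c"
  using sum_weights_pos by (simp add: wavg_def sum_distrib_right[symmetric])

lemma wavg_cong: "(\<And>i. i \<in> I \<Longrightarrow> f i = g i) \<Longrightarrow> wavg I w f = wavg I w g"
  by (simp add: wavg_def)

lemma wavg_add: "wavg I w (\<lambda>i. f i + g i) = wavg I w f + wavg I w g"
  by (simp add: wavg_def distrib_left sum.distrib add_divide_distrib)

lemma wavg_diff: "wavg I w (\<lambda>i. f i - g i) = wavg I w f - wavg I w g"
  by (simp add: wavg_def right_diff_distrib sum_subtractf diff_divide_distrib)

lemma wavg_cmult: "wavg I w (\<lambda>i. c * f i) = c * wavg I w f"
  by (simp add: wavg_def sum_distrib_left mult.left_commute)

lemma wavg_multc: "wavg I w (\<lambda>i. f i * c) = wavg I w f * c"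
  using wavg_cmult[of c f] by (simp add: mult.commute)

lemma wavg_centered: "wavg I w (\<lambda>i. f i - wavg I w f) = 0"
  by (simp add: wavg_diff)

lemma wavg_mono: "(\<And>i. i \<in> I \<Longrightarrow> f i \<le> g i) \<Longrightarrow> wavg I w f \<le> wavg I w g"
  unfolding wavg_def using sum_weights_pos w_pos
  by (intro divide_right_mono sum_mono mult_left_mono) (auto intro: less_imp_le)

lemma wavg_strict_mono: "(\<And>i. i \<in> I \<Longrightarrow> f i < g i) \<Longrightarrow> wavg I w f < wavg I w g"
  unfolding wavg_def using sum_weights_pos w_pos finite_I I_nonempty
  by (intro divide_strict_right_mono sum_strict_mono) auto

lemma abs_wavg_le: "\<bar>wavg I w f\<bar> \<le> wavg I w (\<lambda>i. \<bar>f i\<bar>)"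
proof -
  have "wavg I w f \<le> wavg I w (\<lambda>i. \<bar>f i\<bar>)" by (rule wavg_mono) auto
  moreover have "wavg I w (\<lambda>i. - f i) \<le> wavg I w (\<lambda>i. \<bar>f i\<bar>)" by (rule wavg_mono) auto
  ultimately show ?thesis using wavg_cmult[of "-1" f] by simp
qed

lemma abs_wavg_le_bound: "(\<And>i. i \<in> I \<Longrightarrow> \<bar>f i\<bar> \<le> c) \<Longrightarrow> \<bar>wavg I w f\<bar> \<le> c"
  using abs_wavg_le[of f] wavg_mono[of "\<lambda>i. \<bar>f i\<bar>" "\<lambda>_. c"] by simp

lemma abs_diff_wavg_le: "(\<And>j. j \<in> I \<Longrightarrow> \<bar>f i - f j\<bar> \<le> c) \<Longrightarrow> \<bar>f i - wavg I w f\<bar> \<le> c"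
  using abs_wavg_le_bound[of "\<lambda>j. f i - f j" c] by (simp add: wavg_diff)

end

lemma cosh_le_exp_square_half: "cosh (l::real) \<le> exp (l\<^sup>2 / 2)"
proof -
  define h where "h = 2 * \<bar>l\<bar>"
  have pos: "1 + (1/2) * (exp h - 1) > 0"
    using exp_gt_zero[of h] by (simp add: field_simps add_pos_pos)
  have "cosh l = exp (- h * (1/2)) * (1 + (1/2) * (exp h - 1))"
    by (cases "l \<ge> 0") (simp_all add: h_def cosh_def field_simps exp_add[symmetric] exp_minus_inverse)
  also have "\<dots> = exp (- h * (1/2) + ln (1 + (1/2) * (exp h - 1)))"
    by (simp only: exp_add exp_ln[OF pos])
  also have "\<dots> \<le> exp (h\<^sup>2 / 8)"
    using Hoeffdings_lemma_aux[of h "1/2"] by (simp add: h_def)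
  also have "h\<^sup>2 / 8 = l\<^sup>2 / 2" by (simp add: h_def power_mult_distrib)
  finally show ?thesis .
qed

lemma exp_mult_le_cosh_sinh:
  assumes "\<bar>y\<bar> \<le> 1"
  shows "exp (l * y) \<le> cosh l + y * sinh (l::real)"
proof -
  define t where "t = (1 + y) / 2"
  have "t \<ge> 0" "t \<le> 1" using assms by (auto simp: t_def)
  then have "exp ((1 - t) * (- l) + t * l) \<le> (1 - t) * exp (- l) + t * exp l"
    using convex_onD[OF exp_convex, of t "- l" l] by simp
  moreover have "(1 - t) * (- l) + t * l = l * y" by (simp add: t_def field_simps)
  moreover have "(1 - t) * exp (- l) + t * exp l = cosh l + y * sinh l"
    by (simp add: t_def cosh_def sinh_def field_simps)
  ultimately show ?thesis by simp
qed

lemma (in pos_weights) wavg_exp_le: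
  assumes "\<And>i. i \<in> I \<Longrightarrow> \<bar>g i\<bar> \<le> 1" and "wavg I w g = 0"
  shows "wavg I w (\<lambda>i. exp (l * g i)) \<le> exp (l\<^sup>2 / 2)"
proof -
  have "wavg I w (\<lambda>i. exp (l * g i)) \<le> wavg I w (\<lambda>i. cosh l + g i * sinh l)"
    using assms(1) exp_mult_le_cosh_sinh by (intro wavg_mono) auto
  also have "\<dots> = cosh l" by (simp add: wavg_add wavg_multc assms(2))
  finally show ?thesis using cosh_le_exp_square_half order_trans by blast
qed

section \<open>Concentration for independent coordinates\<close>

definition prod_weight :: "('a \<Rightarrow> real) \<Rightarrow> 'a list \<Rightarrow> real" where
  "prod_weight w xs = (\<Prod>x\<leftarrow>xs. w x)"

text \<open>The expectation of \<open>F\<close> when the coordinates are independent and the \<open>k\<close>-th one is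
  distributed on \<open>As ! k\<close> with probabilities proportional to \<open>w\<close>.\<close>

abbreviation prod_avg :: "'a set list \<Rightarrow> ('a \<Rightarrow> real) \<Rightarrow> ('a list \<Rightarrow> real) \<Rightarrow> real" where
  "prod_avg As w \<equiv> wavg (listset As) (prod_weight w)"

lemma Cons_in_listset_iff [simp]: "x # xs \<in> listset (A # As) \<longleftrightarrow> x \<in> A \<and> xs \<in> listset As"
  by (simp add: set_Cons_def)

declare listset.simps(2) [simp del]

lemma listset_Cons_eq_image: "listset (A # As) = (\<lambda>(x, xs). x # xs) ` (A \<times> listset As)"
  by (auto simp: set_Cons_def listset.simps)

lemma length_listset: "xs \<in> listset As \<Longrightarrow> length xs = length As"
  by (induction As arbitrary: xs) (auto simp: set_Cons_def listset.simps)

lemma card_listset: "card (listset As) = (\<Prod>A\<leftarrow>As. card A)"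
proof (induction As)
  case (Cons A As)
  have "inj_on (\<lambda>(x, xs). x # xs) (A \<times> listset As)" by (auto simp: inj_on_def)
  then show ?case using Cons unfolding listset_Cons_eq_image by (simp add: card_image card_cartesian_product)
qed simp

lemma prod_weight_Nil [simp]: "prod_weight w [] = 1"
  by (simp add: prod_weight_def)

lemma pos_weights_listset:
  assumes "\<forall>A\<in>set As. pos_weights A w"
  shows "pos_weights (listset As) (prod_weight w)"
  using assms
proof (induction As)
  case Nil
  show ?case by unfold_locales (auto simp: prod_weight_def)
next
  case (Cons A As)
  interpret A: pos_weights A w using Cons.prems by simp
  interpret L: pos_weights "listset As" "prod_weight w" using Cons by simp
  show ?case
  proof unfold_locales
    show "finite (listset (A # As))" "listset (A # As) \<noteq> {}"
      unfolding listset_Cons_eq_image using A.finite_I L.finite_I A.I_nonempty L.I_nonempty by auto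
    show "prod_weight w ys > 0" if "ys \<in> listset (A # As)" for ys
      using that A.w_pos L.w_pos by (auto simp: set_Cons_def listset.simps prod_weight_def)
  qed
qed

lemma prod_avg_Cons:
  assumes "pos_weights (listset As) (prod_weight w)"
  shows "prod_avg (A # As) w F = wavg A w (\<lambda>x. prod_avg As w (\<lambda>xs. F (x # xs)))"
proof -
  interpret L: pos_weights "listset As" "prod_weight w" by fact
  define Z where "Z = (\<Sum>xs\<in>listset As. prod_weight w xs)"
  have "Z > 0" using L.sum_weights_pos by (simp add: Z_def)
  have inj: "inj_on (\<lambda>(x, xs). x # xs) (A \<times> listset As)" by (auto simp: inj_on_def)
  have sum_Cons: "(\<Sum>ys\<in>listset (A # As). h ys) = (\<Sum>x\<in>A. \<Sum>xs\<in>listset As. h (x # xs))" for h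
    unfolding listset_Cons_eq_image sum.reindex[OF inj] by (simp add: sum.cartesian_product split_def)
  have num: "(\<Sum>ys\<in>listset (A # As). prod_weight w ys * F ys)
      = Z * (\<Sum>x\<in>A. w x * prod_avg As w (\<lambda>xs. F (x # xs)))"
  proof -
    have "Z * (w x * prod_avg As w (\<lambda>xs. F (x # xs)))
        = (\<Sum>xs\<in>listset As. prod_weight w (x # xs) * F (x # xs))" for x
      using \<open>Z > 0\<close> unfolding wavg_def Z_def[symmetric]
      by (simp add: prod_weight_def sum_distrib_left[of "w x"] mult.assoc)
    then show ?thesis unfolding sum_Cons sum_distrib_left by simp
  qed
  have den: "(\<Sum>ys\<in>listset (A # As). prod_weight w ys) = Z * (\<Sum>x\<in>A. w x)"
    unfolding sum_Cons
    by (simp add: Z_def prod_weight_def sum_distrib_left sum_distrib_right mult.commute sum.swap[of _ "listset As"])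
  show ?thesis using \<open>Z > 0\<close> unfolding wavg_def[of "listset (A # As)"] num den by (simp add: wavg_def)
qed

definition bounded_differences :: "'a set list \<Rightarrow> ('a list \<Rightarrow> real) \<Rightarrow> bool" where
  "bounded_differences As F \<longleftrightarrow> (\<forall>p x y xs. p @ x # xs \<in> listset As \<longrightarrow> p @ y # xs \<in> listset As \<longrightarrow>
     \<bar>F (p @ x # xs) - F (p @ y # xs)\<bar> \<le> 1)"

lemma bounded_differences_Cons:
  "bounded_differences (A # As) F \<Longrightarrow> x \<in> A \<Longrightarrow> bounded_differences As (\<lambda>xs. F (x # xs))"
  unfolding bounded_differences_def by (metis Cons_eq_appendI Cons_in_listset_iff)

lemma bounded_differences_head:
  "bounded_differences (A # As) F \<Longrightarrow> x \<in> A \<Longrightarrow> y \<in> A \<Longrightarrow> xs \<in> listset As \<Longrightarrow>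
    \<bar>F (x # xs) - F (y # xs)\<bar> \<le> 1"
  unfolding bounded_differences_def by (metis Cons_in_listset_iff append_Nil)

lemma abs_conditional_mean_diff_le:
  assumes "\<forall>B\<in>set (A # As). pos_weights B w" and "bounded_differences (A # As) F" and "x \<in> A"
  shows "\<bar>prod_avg As w (\<lambda>xs. F (x # xs)) - prod_avg (A # As) w F\<bar> \<le> 1"
proof -
  interpret A: pos_weights A w using assms(1) by simp
  interpret L: pos_weights "listset As" "prod_weight w" using assms(1) by (auto intro: pos_weights_listset)
  have "\<bar>prod_avg As w (\<lambda>xs. F (x # xs)) - prod_avg As w (\<lambda>xs. F (y # xs))\<bar> \<le> 1" if "y \<in> A" for y
    using L.abs_wavg_le_bound[of "\<lambda>xs. F (x # xs) - F (y # xs)"]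
      bounded_differences_head[OF assms(2,3) that] by (simp add: L.wavg_diff)
  then show ?thesis
    using A.abs_diff_wavg_le[of "\<lambda>x. prod_avg As w (\<lambda>xs. F (x # xs))"]
    by (simp add: prod_avg_Cons[OF L.pos_weights_axioms])
qed

theorem prod_avg_variance_le:
  assumes "\<forall>A\<in>set As. pos_weights A w" and "bounded_differences As F"
  shows "prod_avg As w (\<lambda>xs. (F xs - prod_avg As w F)\<^sup>2) \<le> length As"
  using assms
proof (induction As arbitrary: F)
  case (Cons A As)
  interpret A: pos_weights A w using Cons.prems(1) by simp
  interpret L: pos_weights "listset As" "prod_weight w" using Cons.prems(1) by (auto intro: pos_weights_listset)
  define G where "G = (\<lambda>x. prod_avg As w (\<lambda>xs. F (x # xs)))"
  define \<mu> where "\<mu> = prod_avg (A # As) w F"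
  have "prod_avg As w (\<lambda>xs. (F (x # xs) - \<mu>)\<^sup>2) \<le> real (length As) + 1" if "x \<in> A" for x
  proof -
    have "prod_avg As w (\<lambda>xs. (F (x # xs) - \<mu>)\<^sup>2)
        = prod_avg As w (\<lambda>xs. (F (x # xs) - G x)\<^sup>2 + (2 * (G x - \<mu>) * (F (x # xs) - G x) + (G x - \<mu>)\<^sup>2))"
      by (intro L.wavg_cong) (simp add: power2_eq_square algebra_simps)
    also have "\<dots> = prod_avg As w (\<lambda>xs. (F (x # xs) - G x)\<^sup>2) + (G x - \<mu>)\<^sup>2"
      by (simp add: L.wavg_add L.wavg_cmult L.wavg_diff G_def)
    also have "\<dots> \<le> real (length As) + 1"
    proof (rule add_mono)
      show "prod_avg As w (\<lambda>xs. (F (x # xs) - G x)\<^sup>2) \<le> length As"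
        using Cons.IH[of "\<lambda>xs. F (x # xs)"] Cons.prems(1) bounded_differences_Cons[OF Cons.prems(2) that]
        by (simp add: G_def)
      show "(G x - \<mu>)\<^sup>2 \<le> 1"
        using abs_conditional_mean_diff_le[OF Cons.prems that] by (simp add: G_def \<mu>_def abs_square_le_1)
    qed
    finally show ?thesis .
  qed
  then have "wavg A w (\<lambda>x. prod_avg As w (\<lambda>xs. (F (x # xs) - \<mu>)\<^sup>2)) \<le> real (length As) + 1"
    using A.wavg_mono[of _ "\<lambda>_. real (length As) + 1"] by simp
  then show ?case using prod_avg_Cons[OF L.pos_weights_axioms] by (simp add: \<mu>_def)
qed simp

theorem prod_avg_exp_moment_le:
  assumes "\<forall>A\<in>set As. pos_weights A w" and "bounded_differences As F"
  shows "prod_avg As w (\<lambda>xs. exp (l * (F xs - prod_avg As w F))) \<le> exp (l\<^sup>2 / 2) ^ length As"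
  using assms
proof (induction As arbitrary: F)
  case (Cons A As)
  interpret A: pos_weights A w using Cons.prems(1) by simp
  interpret L: pos_weights "listset As" "prod_weight w" using Cons.prems(1) by (auto intro: pos_weights_listset)
  define G where "G = (\<lambda>x. prod_avg As w (\<lambda>xs. F (x # xs)))"
  define \<mu> where "\<mu> = prod_avg (A # As) w F"
  have \<mu>: "\<mu> = wavg A w G" using prod_avg_Cons[OF L.pos_weights_axioms] by (simp add: \<mu>_def G_def)
  have cond: "prod_avg As w (\<lambda>xs. exp (l * (F (x # xs) - \<mu>))) \<le> exp (l * (G x - \<mu>)) * exp (l\<^sup>2 / 2) ^ length As"
    if "x \<in> A" for x
  proof -
    have "prod_avg As w (\<lambda>xs. exp (l * (F (x # xs) - \<mu>)))
        = prod_avg As w (\<lambda>xs. exp (l * (G x - \<mu>)) * exp (l * (F (x # xs) - G x)))"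
      by (intro L.wavg_cong) (simp add: exp_add[symmetric] algebra_simps)
    also have "\<dots> = exp (l * (G x - \<mu>)) * prod_avg As w (\<lambda>xs. exp (l * (F (x # xs) - G x)))"
      by (rule L.wavg_cmult)
    also have "\<dots> \<le> exp (l * (G x - \<mu>)) * exp (l\<^sup>2 / 2) ^ length As"
      using Cons.IH[of "\<lambda>xs. F (x # xs)"] Cons.prems(1) bounded_differences_Cons[OF Cons.prems(2) that]
      by (simp add: G_def)
    finally show ?thesis .
  qed
  have "wavg A w (\<lambda>x. prod_avg As w (\<lambda>xs. exp (l * (F (x # xs) - \<mu>))))
      \<le> wavg A w (\<lambda>x. exp (l * (G x - \<mu>)) * exp (l\<^sup>2 / 2) ^ length As)"
    using cond by (rule A.wavg_mono)
  also have "\<dots> = wavg A w (\<lambda>x. exp (l * (G x - \<mu>))) * exp (l\<^sup>2 / 2) ^ length As"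
    by (rule A.wavg_multc)
  also have "\<dots> \<le> exp (l\<^sup>2 / 2) * exp (l\<^sup>2 / 2) ^ length As"
  proof (rule mult_right_mono)
    show "wavg A w (\<lambda>x. exp (l * (G x - \<mu>))) \<le> exp (l\<^sup>2 / 2)"
    proof (rule A.wavg_exp_le)
      show "\<bar>G x - \<mu>\<bar> \<le> 1" if "x \<in> A" for x
        using abs_conditional_mean_diff_le[OF Cons.prems that] by (simp add: \<mu>_def G_def)
      show "wavg A w (\<lambda>x. G x - \<mu>) = 0" by (simp add: \<mu> A.wavg_centered)
    qed
  qed simp
  finally show ?case using prod_avg_Cons[OF L.pos_weights_axioms] by (simp add: \<mu>_def)
qed simp

lemma indicator_lt_exp_sum:
  fixes l y s :: real
  assumes "l > 0"
  shows "(if \<bar>y\<bar> > s then 1 else 0) < (exp (l * y) + exp ((- l) * y)) * exp (- (l * s))"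
proof (cases "\<bar>y\<bar> > s")
  case True
  then have "0 < l * (\<bar>y\<bar> - s)" using assms by simp
  then have "1 < exp (l * \<bar>y\<bar> - l * s)" by (simp add: right_diff_distrib)
  also have "\<dots> = exp (l * \<bar>y\<bar>) * exp (- (l * s))" by (simp add: exp_diff exp_minus field_simps)
  also have "\<dots> < (exp (l * y) + exp ((- l) * y)) * exp (- (l * s))"
    by (cases "y \<ge> 0") (simp_all add: abs_if)
  finally show ?thesis using True by simp
qed (simp add: add_pos_pos)

lemma prod_avg_two_sided_chernoff:
  assumes "\<forall>A\<in>set As. pos_weights A w" and "bounded_differences As F" and "l > 0"
  shows "prod_avg As w (\<lambda>xs. if \<bar>F xs - prod_avg As w F\<bar> > s then 1 else 0)
    < 2 * exp (l\<^sup>2 / 2) ^ length As * exp (- (l * s))"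
proof -
  interpret L: pos_weights "listset As" "prod_weight w" using assms(1) by (rule pos_weights_listset)
  define \<mu> where "\<mu> = prod_avg As w F"
  have "prod_avg As w (\<lambda>xs. if \<bar>F xs - \<mu>\<bar> > s then 1 else 0)
      < prod_avg As w (\<lambda>xs. (exp (l * (F xs - \<mu>)) + exp ((- l) * (F xs - \<mu>))) * exp (- (l * s)))"
    using indicator_lt_exp_sum[OF assms(3)] by (intro L.wavg_strict_mono)
  also have "\<dots> = (prod_avg As w (\<lambda>xs. exp (l * (F xs - \<mu>)))
      + prod_avg As w (\<lambda>xs. exp ((- l) * (F xs - \<mu>)))) * exp (- (l * s))"
    by (simp add: L.wavg_multc L.wavg_add)
  also have "\<dots> \<le> (exp (l\<^sup>2 / 2) ^ length As + exp ((- l)\<^sup>2 / 2) ^ length As) * exp (- (l * s))"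
    using prod_avg_exp_moment_le[OF assms(1,2), of l] prod_avg_exp_moment_le[OF assms(1,2), of "- l"]
    by (intro mult_right_mono add_mono) (auto simp: \<mu>_def)
  finally show ?thesis by (simp add: \<mu>_def)
qed

theorem prod_avg_tail_lt:
  assumes "\<forall>A\<in>set As. pos_weights A w" and "bounded_differences As F" and "t > 0"
  shows "prod_avg As w (\<lambda>xs. if \<bar>F xs - prod_avg As w F\<bar> > t * sqrt (length As) then 1 else 0)
    < 2 * exp (- (t\<^sup>2) / 2)"
proof (cases "As = []")
  case False
  define m where "m = real (length As)"
  have "m > 0" using False by (simp add: m_def)
  define l where "l = t / sqrt m"
  have "l > 0" using \<open>m > 0\<close> assms(3) by (simp add: l_def)
  have "exp (l\<^sup>2 / 2) ^ length As * exp (- (l * (t * sqrt m))) = exp (m * (l\<^sup>2 / 2) + - (l * (t * sqrt m)))"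
    unfolding exp_add m_def exp_of_nat_mult ..
  also have "m * (l\<^sup>2 / 2) + - (l * (t * sqrt m)) = - (t\<^sup>2) / 2"
    using \<open>m > 0\<close> by (simp add: l_def power_divide power2_eq_square)
  finally show ?thesis
    using prod_avg_two_sided_chernoff[OF assms(1,2) \<open>l > 0\<close>, of "t * sqrt m"] by (simp add: m_def)
qed simp

section \<open>Lehmer codes\<close>

definition skip :: "nat \<Rightarrow> nat \<Rightarrow> nat" where
  "skip c x = (if x < c then x else Suc x)"

lemma skip_less_iff [simp]: "skip c x < skip c y \<longleftrightarrow> x < y"
  by (simp add: skip_def)

lemma skip_eq_iff [simp]: "skip c x = skip c y \<longleftrightarrow> x = y"
  by (auto simp: skip_def)

lemma strict_mono_skip: "strict_mono (skip c)"
  by (simp add: strict_mono_def)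

lemma skip_image_lessThan:
  assumes "c \<le> n"
  shows "skip c ` {..<n} = {..<Suc n} - {c}"
proof (intro set_eqI iffI)
  fix y assume "y \<in> {..<Suc n} - {c}"
  then have "y = skip c (if y < c then y else y - 1)" "(if y < c then y else y - 1) \<in> {..<n}"
    using assms by (auto simp: skip_def)
  then show "y \<in> skip c ` {..<n}" by blast
qed (auto simp: skip_def)

lemma skip_less_imp_le_skip: "skip c x < skip c y \<Longrightarrow> skip c x \<le> skip c' y"
  by (simp add: skip_def split: if_splits)

lemma less_skip_imp_le_skip: "c < skip c y \<Longrightarrow> c \<le> skip c' y"
  by (simp add: skip_def split: if_splits)

fun skips :: "nat list \<Rightarrow> nat \<Rightarrow> nat" where
  "skips [] = id"
| "skips (c # cs) = skip c \<circ> skips cs"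

lemma strict_mono_skips: "strict_mono (skips cs)"
  by (induction cs) (auto simp: strict_mono_def)

fun unlehmer :: "nat list \<Rightarrow> nat list" where
  "unlehmer [] = []"
| "unlehmer (c # cs) = c # map (skip c) (unlehmer cs)"

lemma length_unlehmer [simp]: "length (unlehmer cs) = length cs"
  by (induction cs) auto

lemma unlehmer_append: "unlehmer (p @ cs) = unlehmer p @ map (skips p) (unlehmer cs)"
  by (induction p) auto

lemma unlehmer_inj: "unlehmer cs = unlehmer ds \<Longrightarrow> cs = ds"
proof (induction cs arbitrary: ds)
  case (Cons c cs)
  then obtain ds' where "ds = c # ds'" "map (skip c) (unlehmer cs) = map (skip c) (unlehmer ds')"
    by (cases ds) auto
  then show ?case using Cons.IH by (simp add: inj_map_eq_map inj_on_def)
qed (metis length_0_conv length_unlehmer)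

text \<open>The last Lehmer digit of a permutation of \<open>{1..m+1}\<close> is always 0 and is dropped,
  so codes have \<open>m\<close> digits, the \<open>k\<close>-th ranging over \<open>{0..m+1-k}\<close>.\<close>

fun lehmer_digits :: "nat \<Rightarrow> nat set list" where
  "lehmer_digits 0 = []"
| "lehmer_digits (Suc m) = {..Suc m} # lehmer_digits m"

lemma length_lehmer_digits [simp]: "length (lehmer_digits m) = m"
  by (induction m) auto

lemma card_listset_lehmer_digits: "card (listset (lehmer_digits m)) = fact (Suc m)"
  by (induction m) (simp_all add: card_listset)

lemma set_unlehmer:
  "cs \<in> listset (lehmer_digits m) \<Longrightarrow> set (unlehmer (cs @ [0])) = {..<Suc m}"
proof (induction m arbitrary: cs)
  case (Suc m)
  then obtain c ds where "cs = c # ds" "c \<le> Suc m" "ds \<in> listset (lehmer_digits m)"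
    by (auto simp: listset.simps set_Cons_def)
  then show ?case using Suc.IH skip_image_lessThan[of c "Suc m"] by auto
qed auto

definition perm_of_list :: "nat list \<Rightarrow> nat \<Rightarrow> nat" where
  "perm_of_list xs i = (if i \<in> {1..length xs} then Suc (xs ! (i - 1)) else i)"

lemma perm_of_list_permutes:
  assumes "set xs = {..<length xs}"
  shows "perm_of_list xs permutes {1..length xs}"
proof (rule bij_imp_permutes)
  have "perm_of_list xs ` {1..length xs} = Suc ` (\<lambda>k. xs ! k) ` {..<length xs}"
    by (force simp: perm_of_list_def image_iff Bex_def intro: exI[of _ "Suc _"])
  also have "(\<lambda>k. xs ! k) ` {..<length xs} = set xs" by (auto simp: in_set_conv_nth)
  also have "Suc ` set xs = {1..length xs}" using assms by (simp add: image_Suc_lessThan)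
  finally have "perm_of_list xs ` {1..length xs} = {1..length xs}" .
  then show "bij_betw (perm_of_list xs) {1..length xs} {1..length xs}"
    by (simp add: bij_betw_def eq_card_imp_inj_on)
qed (auto simp: perm_of_list_def)

lemma perm_of_list_inj:
  assumes "length xs = length ys" and "perm_of_list xs = perm_of_list ys"
  shows "xs = ys"
proof (rule nth_equalityI)
  fix k assume "k < length xs"
  then show "xs ! k = ys ! k"
    using fun_cong[OF assms(2), of "Suc k"] assms(1) by (simp add: perm_of_list_def)
qed fact

definition lehmer_perm :: "nat list \<Rightarrow> nat \<Rightarrow> nat" where
  "lehmer_perm cs = perm_of_list (unlehmer (cs @ [0]))"

lemma bij_betw_lehmer_perm: "bij_betw lehmer_perm (listset (lehmer_digits m)) (perms (Suc m))"
proof -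
  have len: "length cs = m" if "cs \<in> listset (lehmer_digits m)" for cs
    using length_listset[OF that] by simp
  have inj: "inj_on lehmer_perm (listset (lehmer_digits m))"
  proof (rule inj_onI)
    fix cs ds
    assume "cs \<in> listset (lehmer_digits m)" "ds \<in> listset (lehmer_digits m)" "lehmer_perm cs = lehmer_perm ds"
    then have "unlehmer (cs @ [0]) = unlehmer (ds @ [0])"
      by (intro perm_of_list_inj) (simp_all add: lehmer_perm_def len)
    then show "cs = ds" by (auto dest: unlehmer_inj)
  qed
  have "lehmer_perm cs \<in> perms (Suc m)" if "cs \<in> listset (lehmer_digits m)" for cs
    using perm_of_list_permutes[of "unlehmer (cs @ [0])"] set_unlehmer[OF that] len[OF that]
    by (simp add: lehmer_perm_def perms_def)
  then have sub: "lehmer_perm ` listset (lehmer_digits m) \<subseteq> perms (Suc m)" by auto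
  have "card (perms (Suc m)) = fact (Suc m)"
    unfolding perms_def using card_permutations[of "{1..Suc m}" "Suc m"] by simp
  then have "lehmer_perm ` listset (lehmer_digits m) = perms (Suc m)"
    using card_listset_lehmer_digits[of m] card_image[OF inj] sub
    by (intro card_subset_eq) (auto simp: perms_def finite_permutations)
  then show ?thesis using inj by (simp add: bij_betw_def)
qed

definition inversions :: "nat list \<Rightarrow> (nat \<times> nat) set" where
  "inversions xs = {(i, j). i < j \<and> j < length xs \<and> xs ! j < xs ! i}"

lemma inversions_map_strict_mono: "strict_mono f \<Longrightarrow> inversions (map f xs) = inversions xs"
  by (auto simp: inversions_def strict_mono_less)

lemma finite_inversions: "finite (inversions xs)"
  by (rule finite_subset[of _ "{..<length xs} \<times> {..<length xs}"]) (auto simp: inversions_def)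

lemma card_inversions_Cons:
  "card (inversions (x # xs)) = length (filter (\<lambda>y. y < x) xs) + card (inversions xs)"
proof -
  define A where "A = (\<lambda>j. (0::nat, Suc j)) ` {j. j < length xs \<and> xs ! j < x}"
  define B where "B = (\<lambda>(i, j). (Suc i, Suc j)) ` inversions xs"
  have "inversions (x # xs) = A \<union> B"
  proof (intro set_eqI iffI)
    fix z assume "z \<in> inversions (x # xs)"
    then obtain i j where "z = (i, Suc j)" "i < Suc j" "j < length xs" "xs ! j < (x # xs) ! i"
      by (auto simp: inversions_def less_Suc_eq_0_disj)
    then show "z \<in> A \<union> B"
      by (cases i) (auto simp: A_def B_def inversions_def image_iff)
  qed (auto simp: A_def B_def inversions_def)
  moreover have "card A = length (filter (\<lambda>y. y < x) xs)"
    unfolding A_def by (subst card_image) (auto simp: inj_on_def length_filter_conv_card)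
  moreover have "card B = card (inversions xs)"
    unfolding B_def by (rule card_image) (auto simp: inj_on_def)
  moreover have "A \<inter> B = {}" by (auto simp: A_def B_def)
  ultimately show ?thesis
    using finite_inversions by (simp add: card_Un_disjoint A_def B_def)
qed

lemma card_inversions_unlehmer:
  "cs \<in> listset (lehmer_digits m) \<Longrightarrow> card (inversions (unlehmer (cs @ [0]))) = sum_list cs"
proof (induction m arbitrary: cs)
  case (Suc m)
  then obtain c ds where cs: "cs = c # ds" "c \<le> Suc m" "ds \<in> listset (lehmer_digits m)"
    by (auto simp: listset.simps set_Cons_def)
  define ys where "ys = unlehmer (ds @ [0])"
  have "distinct ys"
    using set_unlehmer[OF cs(3)] length_listset[OF cs(3)]
    by (intro card_distinct) (simp add: ys_def)
  have "length (filter (\<lambda>y. y < c) (map (skip c) ys)) = length (filter (\<lambda>y. y < c) ys)"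
    by (simp add: filter_map comp_def skip_def)
  also have "\<dots> = card ({y. y < c} \<inter> {..<Suc m})"
    using \<open>distinct ys\<close> set_unlehmer[OF cs(3)] by (simp add: distinct_length_filter ys_def)
  also have "\<dots> = c" using cs(2) by (simp add: Int_absorb2 subset_iff)
  finally show ?case
    using Suc.IH[OF cs(3)] strict_mono_skip
    by (simp add: cs(1) ys_def card_inversions_Cons inversions_map_strict_mono)
qed (simp add: inversions_def card_eq_0_iff)

lemma inv_count_perm_of_list: "inv_count (length xs) (perm_of_list xs) = card (inversions xs)"
proof -
  have "{(i, j). i \<in> {1..length xs} \<and> j \<in> {1..length xs} \<and> i < j \<and> perm_of_list xs i > perm_of_list xs j}
      = (\<lambda>(i, j). (Suc i, Suc j)) ` inversions xs"
    (is "?L = _")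
  proof (intro set_eqI iffI)
    fix z assume "z \<in> ?L"
    then obtain i j where "z = (i, j)" "1 \<le> i" "i < j" "j \<le> length xs" "xs ! (j - 1) < xs ! (i - 1)"
      by (auto simp: perm_of_list_def)
    then have "z = (Suc (i - 1), Suc (j - 1))" "(i - 1, j - 1) \<in> inversions xs"
      by (auto simp: inversions_def)
    then show "z \<in> (\<lambda>(i, j). (Suc i, Suc j)) ` inversions xs" by force
  qed (auto simp: perm_of_list_def inversions_def)
  moreover have "inj_on (\<lambda>(i, j). (Suc i, Suc j)) (inversions xs)" by (auto simp: inj_on_def)
  ultimately show ?thesis unfolding inv_count_def by (simp only: card_image)
qed

section \<open>Longest increasing subsequences\<close>

lemma LIS_attained: "\<exists>S. S \<subseteq> {1..n} \<and> strict_mono_on S \<pi> \<and> card S = LIS n \<pi>"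
  and LIS_ge: "S \<subseteq> {1..n} \<Longrightarrow> strict_mono_on S \<pi> \<Longrightarrow> card S \<le> LIS n \<pi>"
proof -
  define C where "C = {card S | S. S \<subseteq> {1..n} \<and> strict_mono_on S \<pi>}"
  have LIS: "LIS n \<pi> = Max C"
    unfolding LIS_def C_def by (simp add: strict_mono_on_def monotone_on_def)
  have "finite C" unfolding C_def by (rule finite_subset[of _ "card ` Pow {1..n}"]) auto
  moreover have "card {} \<in> C" unfolding C_def by (auto intro!: exI[of _ "{}"] strict_mono_onI)
  ultimately have "LIS n \<pi> \<in> C" "\<And>k. k \<in> C \<Longrightarrow> k \<le> LIS n \<pi>"
    unfolding LIS by (auto intro: Max_in Max_ge)
  then show "\<exists>S. S \<subseteq> {1..n} \<and> strict_mono_on S \<pi> \<and> card S = LIS n \<pi>"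
    and "S \<subseteq> {1..n} \<Longrightarrow> strict_mono_on S \<pi> \<Longrightarrow> card S \<le> LIS n \<pi>"
    by (auto simp: C_def)
qed

lemma strict_mono_on_after_change:
  fixes \<pi> \<pi>' :: "nat \<Rightarrow> nat"
  assumes "finite S" and "strict_mono_on S \<pi>"
    and before: "\<And>i. i \<in> S \<Longrightarrow> i < P \<Longrightarrow> \<pi>' i = \<pi> i"
    and after: "\<And>i j. i \<in> S \<Longrightarrow> j \<in> S \<Longrightarrow> P < i \<Longrightarrow> i < j \<Longrightarrow> \<pi> i < \<pi> j \<Longrightarrow> \<pi>' i < \<pi>' j"
    and dominated: "\<And>i j. i \<in> S \<Longrightarrow> j \<in> S \<Longrightarrow> P \<le> i \<Longrightarrow> i < j \<Longrightarrow> \<pi> i < \<pi> j \<Longrightarrow> \<pi> i \<le> \<pi>' j"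
  shows "\<exists>S'\<subseteq>S. strict_mono_on S' \<pi>' \<and> card S \<le> Suc (card S')"
proof (cases "{j\<in>S. P \<le> j} = {}")
  case True
  have "strict_mono_on S \<pi>'"
  proof (rule strict_mono_onI)
    fix i j assume ij: "i \<in> S" "j \<in> S" "i < j"
    then have "j < P" using True by auto
    then show "\<pi>' i < \<pi>' j" using ij before strict_mono_onD[OF assms(2) ij] by simp
  qed
  then show ?thesis by (intro exI[of _ S]) simp
next
  case False
  define r where "r = Min {j\<in>S. P \<le> j}"
  have "finite {j\<in>S. P \<le> j}" using \<open>finite S\<close> by simp
  then have r: "r \<in> S" "P \<le> r" and r_min: "\<And>j. j \<in> S \<Longrightarrow> P \<le> j \<Longrightarrow> r \<le> j"
    using Min_in[OF _ False] Min_le unfolding r_def by blast+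
  have "strict_mono_on (S - {r}) \<pi>'"
  proof (rule strict_mono_onI)
    fix i j assume ij: "i \<in> S - {r}" "j \<in> S - {r}" "i < j"
    have lt: "\<pi> i < \<pi> j" using ij strict_mono_onD[OF assms(2)] by auto
    consider "j < P" | "i < P" "P \<le> j" | "P \<le> i" by linarith
    then show "\<pi>' i < \<pi>' j"
    proof cases
      case 1 then show ?thesis using before ij lt by auto
    next
      case 2
      have "r \<le> j" using r_min ij 2 by simp
      then have "r < j" using ij by auto
      moreover have "i < r" using 2 r by simp
      ultimately have "\<pi> i < \<pi> r" "\<pi> r < \<pi> j"
        using ij r strict_mono_onD[OF assms(2)] by auto
      moreover have "\<pi> r \<le> \<pi>' j" using dominated ij r \<open>r < j\<close> \<open>\<pi> r < \<pi> j\<close> by simp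
      ultimately show ?thesis using before ij 2 by simp
    next
      case 3
      have "r \<le> i" using r_min ij 3 by simp
      then have "P < i" using r ij by auto
      then show ?thesis using after ij lt by simp
    qed
  qed
  moreover have "card S \<le> Suc (card (S - {r}))" using r \<open>finite S\<close> by (simp add: card_Suc_Diff1)
  ultimately show ?thesis by (intro exI[of _ "S - {r}"]) simp
qed

lemma LIS_perm_of_list_le_Suc:
  assumes "length ys = length xs" and "take k ys = take k xs"
    and after: "\<And>i j. k < i \<Longrightarrow> i < j \<Longrightarrow> j < length xs \<Longrightarrow> xs ! i < xs ! j \<Longrightarrow> ys ! i < ys ! j"
    and dominated: "\<And>i j. k \<le> i \<Longrightarrow> i < j \<Longrightarrow> j < length xs \<Longrightarrow> xs ! i < xs ! j \<Longrightarrow> xs ! i \<le> ys ! j"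
  shows "LIS (length xs) (perm_of_list xs) \<le> Suc (LIS (length xs) (perm_of_list ys))"
proof -
  obtain S where S: "S \<subseteq> {1..length xs}" "strict_mono_on S (perm_of_list xs)"
    and card_S: "card S = LIS (length xs) (perm_of_list xs)"
    using LIS_attained by blast
  have val: "perm_of_list zs i = Suc (zs ! (i - 1))" "i - 1 < length xs"
    if "i \<in> S" "length zs = length xs" for zs i
    using that S(1) by (force simp: perm_of_list_def)+
  have "\<exists>S'\<subseteq>S. strict_mono_on S' (perm_of_list ys) \<and> card S \<le> Suc (card S')"
  proof (rule strict_mono_on_after_change[where P = "Suc k"])
    show "finite S" using S(1) finite_subset by blast
    show "strict_mono_on S (perm_of_list xs)" by fact
    show "perm_of_list ys i = perm_of_list xs i" if "i \<in> S" "i < Suc k" for i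
    proof -
      have "i - 1 < k" using that S(1) by force
      then show ?thesis using that val assms(1,2) nth_take[of "i - 1" k xs] nth_take[of "i - 1" k ys] by metis
    qed
    show "perm_of_list ys i < perm_of_list ys j"
      if "i \<in> S" "j \<in> S" "Suc k < i" "i < j" "perm_of_list xs i < perm_of_list xs j" for i j
      using that val assms(1) after[of "i - 1" "j - 1"] by simp
    show "perm_of_list xs i \<le> perm_of_list ys j"
      if "i \<in> S" "j \<in> S" "Suc k \<le> i" "i < j" "perm_of_list xs i < perm_of_list xs j" for i j
      using that val assms(1) dominated[of "i - 1" "j - 1"] by simp
  qed
  then obtain S' where "S' \<subseteq> S" "strict_mono_on S' (perm_of_list ys)" "card S \<le> Suc (card S')"
    by blast
  moreover have "card S' \<le> LIS (length xs) (perm_of_list ys)"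
    using calculation S(1) by (intro LIS_ge) auto
  ultimately show ?thesis using card_S by simp
qed

lemma LIS_unlehmer_change_le_Suc:
  fixes p ds :: "nat list" and c c' :: nat
  defines "xs \<equiv> unlehmer (p @ c # ds)" and "ys \<equiv> unlehmer (p @ c' # ds)"
  shows "LIS (length xs) (perm_of_list xs) \<le> Suc (LIS (length xs) (perm_of_list ys))"
proof (rule LIS_perm_of_list_le_Suc[where k = "length p"])
  define g where "g = skips p"
  define r where "r = unlehmer ds"
  have "strict_mono g" unfolding g_def by (rule strict_mono_skips)
  have xs: "xs = unlehmer p @ g c # map (g \<circ> skip c) r" and ys: "ys = unlehmer p @ g c' # map (g \<circ> skip c') r"
    by (simp_all add: xs_def ys_def g_def r_def unlehmer_append)
  have at_k: "xs ! length p = g c"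
    by (simp add: xs nth_append)
  have after_k: "xs ! i = g (skip c (r ! (i - Suc (length p))))" "ys ! i = g (skip c' (r ! (i - Suc (length p))))"
    if "length p < i" "i < length xs" for i
    using that by (simp_all add: xs ys nth_append)
  show "length ys = length xs" "take (length p) ys = take (length p) xs"
    by (simp_all add: xs ys)
  show "ys ! i < ys ! j" if "length p < i" "i < j" "j < length xs" "xs ! i < xs ! j" for i j
    using that after_k[of i] after_k[of j] strict_mono_less[OF \<open>strict_mono g\<close>] by simp
  show "xs ! i \<le> ys ! j" if "length p \<le> i" "i < j" "j < length xs" "xs ! i < xs ! j" for i j
  proof (cases "i = length p")
    case True
    then show ?thesis using that at_k after_k[of j] less_skip_imp_le_skip
      strict_mono_less[OF \<open>strict_mono g\<close>] strict_mono_less_eq[OF \<open>strict_mono g\<close>] by simp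
  next
    case False
    then show ?thesis using that after_k[of i] after_k[of j] skip_less_imp_le_skip
      strict_mono_less[OF \<open>strict_mono g\<close>] strict_mono_less_eq[OF \<open>strict_mono g\<close>] by simp
  qed
qed

lemma bounded_differences_LIS_lehmer_perm:
  "bounded_differences (lehmer_digits m) (\<lambda>cs. real (LIS (Suc m) (lehmer_perm cs)))"
  unfolding bounded_differences_def
proof (intro allI impI)
  fix p x y xs
  assume "p @ x # xs \<in> listset (lehmer_digits m)"
  then have "length (unlehmer (p @ x # xs @ [0])) = Suc m" using length_listset by fastforce
  then show "\<bar>real (LIS (Suc m) (lehmer_perm (p @ x # xs))) - real (LIS (Suc m) (lehmer_perm (p @ y # xs)))\<bar> \<le> 1"
    using LIS_unlehmer_change_le_Suc[of p x "xs @ [0]" y] LIS_unlehmer_change_le_Suc[of p y "xs @ [0]" x]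
    by (simp add: lehmer_perm_def)
qed

section \<open>The Mallows measure\<close>

lemma prod_weight_power: "prod_weight (\<lambda>c. q ^ c) cs = q ^ sum_list cs"
  by (induction cs) (simp_all add: prod_weight_def power_add)

lemma inv_count_lehmer_perm:
  "cs \<in> listset (lehmer_digits m) \<Longrightarrow> inv_count (Suc m) (lehmer_perm cs) = sum_list cs"
  using inv_count_perm_of_list[of "unlehmer (cs @ [0])"] card_inversions_unlehmer length_listset
  by (fastforce simp: lehmer_perm_def)

lemma mallows_E_eq_prod_avg:
  "mallows_E (Suc m) q X = prod_avg (lehmer_digits m) (\<lambda>c. q ^ c) (\<lambda>cs. X (lehmer_perm cs))"
proof -
  have reindex: "(\<Sum>\<pi>\<in>perms (Suc m). h \<pi>) = (\<Sum>cs\<in>listset (lehmer_digits m). h (lehmer_perm cs))" for h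
    using sum.reindex_bij_betw[OF bij_betw_lehmer_perm, of h m] by simp
  have weight: "q ^ inv_count (Suc m) (lehmer_perm cs) = prod_weight (\<lambda>c. q ^ c) cs"
    if "cs \<in> listset (lehmer_digits m)" for cs
    using that by (simp add: inv_count_lehmer_perm prod_weight_power)
  show ?thesis
    unfolding mallows_E_def mallows_def mallows_Z_def reindex wavg_def
    by (simp add: weight sum_divide_distrib cong: sum.cong)
qed

lemma mallows_P_eq_E: "mallows_P n q A = mallows_E n q (\<lambda>\<pi>. if A \<pi> then 1 else 0)"
proof -
  have "finite (perms n)" unfolding perms_def by (rule finite_permutations) simp
  then show ?thesis unfolding mallows_P_def mallows_E_def by (simp add: sum.inter_filter if_distrib cong: if_cong)
qed

theorem proposition1p8:
  fixes n :: nat and q :: real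
  assumes "n \<ge> 1" and "q > 0"
  shows "mallows_Var n q (\<lambda>\<pi>. real (LIS n \<pi>)) \<le> real n - 1 \<and>
    (\<forall>t::real. t > 0 \<longrightarrow>
      mallows_P n q (\<lambda>\<pi>. \<bar>real (LIS n \<pi>) - mallows_E n q (\<lambda>\<sigma>. real (LIS n \<sigma>))\<bar>
                          > t * sqrt (real n - 1))
      < 2 * exp (- (t\<^sup>2) / 2))"
proof -
  obtain m where n: "n = Suc m" using assms(1) by (cases n) auto
  have factors: "\<forall>A\<in>set (lehmer_digits m). pos_weights A (\<lambda>c. q ^ c)"
    using \<open>q > 0\<close> by (induction m) (auto intro: pos_weights.intro)
  note bd = bounded_differences_LIS_lehmer_perm[of m]
  show ?thesis
    using prod_avg_variance_le[OF factors bd] prod_avg_tail_lt[OF factors bd]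
    by (simp add: n mallows_Var_def mallows_P_eq_E mallows_E_eq_prod_avg)
qed

end
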